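(* Under the standing assumptions, let $\alpha^*(\eta)=\sup\{\theta\cdot\eta-\alpha(\theta):\theta\in\mathbb{R}^m\}$, $\eta\in\mathbb{R}^m$, be the convex conjugate of $\alpha$. Then $\alpha^*(\eta)<+\infty$ if and only if $\eta\in M$, where $M=\operatorname{conv}\{H(x):x\in\mathcal{X}\}\subset\mathbb{R}^m$ is the marginal polytope.
   Context: Standing assumptions. $\mathcal{X}$ is a finite set with a reference measure $\mu$ satisfying $\mu(x)>0$ for all $x$. $p:\mathcal{X}\to(0,\infty)$ is a strictly positive probability density w.r.t. $\mu$, i.e. $\sum_x p(x)\mu(x)=1$, and $\mathbb{E}_p[f]=\sum_x f(x)p(x)\mu(x)$. $\phi:(0,\infty)\to(0,\infty)$ is a positive, strictly increasing, absolutely continuous function with $\int_0^1 dy/\phi(y)=\int_1^{\infty}dy/\phi(y)=+\infty$. The $\phi$-logarithm is $\ln_\phi(v)=\int_1^v dy/\phi(y)$, $v>0$; it is a strictly increasing concave bijection $(0,\infty)\to\mathbb{R}$, and the $\phi$-exponential $\exp_\phi=\ln_\phi^{-1}:\mathbb{R}\to(0,\infty)$ is increasing, convex, differentiable, with $\exp_\phi'(u)=\phi(\exp_\phi(u))$, $\exp_\phi(0)=1$. Let $H=(H_1,\dots,H_m):\mathcal{X}\to\mathbb{R}^m$ be given statistics. For $\theta\in\mathbb{R}^m$, $\alpha(\theta)$ is the unique real number such that $\sum_x \exp_\phi(\theta\cdot H(x)-\alpha(\theta))\,p(x)\mu(x)=1$ (it exists and is unique since $a\mapsto\mathbb{E}_p[\exp_\phi(\theta\cdot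 H-a)]$ is continuous and strictly decreasing from $+\infty$ to $0$); the $\phi$-exponential family is $p_\theta=\exp_\phi(\theta\cdot H-\alpha(\theta))\,p$. The function $\alpha$ is convex. *)

theory Defs
  imports "HOL-Analysis.Analysis"
begin

definition abs_cont_on_interval :: "(real \<Rightarrow> real) \<Rightarrow> real \<Rightarrow> real \<Rightarrow> bool" where
  "abs_cont_on_interval f c d \<longleftrightarrow>
     (\<forall>\<epsilon>>0. \<exists>\<delta>>0. \<forall>(n::nat) (a::nat \<Rightarrow> real) (b::nat \<Rightarrow> real).
        (\<forall>i<n. c \<le> a i \<and> a i \<le> b i \<and> b i \<le> d) \<and>
        (\<forall>i j. i < j \<and> j < n \<longrightarrow> b i \<le> a j) \<and>
        (\<Sum>i<n. b i - a i) < \<delta>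
        \<longrightarrow> (\<Sum>i<n. \<bar>f (b i) - f (a i)\<bar>) < \<epsilon>)"

definition abs_cont_pos :: "(real \<Rightarrow> real) \<Rightarrow> bool" where
  "abs_cont_pos f \<longleftrightarrow> (\<forall>c d. 0 < c \<and> c \<le> d \<longrightarrow> abs_cont_on_interval f c d)"

definition ln_phi :: "(real \<Rightarrow> real) \<Rightarrow> real \<Rightarrow> real" where
  "ln_phi \<phi> v = (LBINT y=1..v. 1 / \<phi> y)"

definition exp_phi :: "(real \<Rightarrow> real) \<Rightarrow> real \<Rightarrow> real" where
  "exp_phi \<phi> = the_inv_into {0<..} (ln_phi \<phi>)"

definition alpha_phi ::
  "(real \<Rightarrow> real) \<Rightarrow> ('x::finite \<Rightarrow> real) \<Rightarrow> ('x \<Rightarrow> real) \<Rightarrow> ('x \<Rightarrow> real ^ 'm) \<Rightarrow> real ^ 'm \<Rightarrow> real" where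
  "alpha_phi \<phi> \<mu> p H \<theta> =
     (THE a. (\<Sum>x\<in>UNIV. exp_phi \<phi> (\<theta> \<bullet> H x - a) * p x * \<mu> x) = 1)"

definition alpha_conj ::
  "(real \<Rightarrow> real) \<Rightarrow> ('x::finite \<Rightarrow> real) \<Rightarrow> ('x \<Rightarrow> real) \<Rightarrow> ('x \<Rightarrow> real ^ 'm) \<Rightarrow> real ^ 'm \<Rightarrow> ereal" where
  "alpha_conj \<phi> \<mu> p H \<eta> = (SUP \<theta>. ereal (\<theta> \<bullet> \<eta> - alpha_phi \<phi> \<mu> p H \<theta>))"

end

theory Submission
  imports Defs
begin

(* The conjugate of alpha is finite exactly on the marginal polytope because
   alpha is sandwiched between two translates of the support function of that polytope:
     max_x theta.H(x) - C  <=  alpha(theta)  <=  max_x theta.H(x).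
   The upper bound holds since otherwise every term of the normalisation sum would be
   < exp_phi 0 = 1; the lower bound holds since a single term cannot exceed the total 1.
   Given such a sandwich, theta.eta - alpha(theta) <= C on the convex hull, and outside it a
   separating hyperplane makes theta.eta - alpha(theta) grow linearly along a ray. *)

section \<open>Conjugates of functions sandwiched by a support function\<close>

text \<open>If \<open>a \<theta>\<close> lies below some \<open>\<theta> \<bullet> H x\<close>, then the conjugate of \<open>a\<close> is infinite
  outside the convex hull of the (finitely many) points \<open>H x\<close>: a strictly separating
  hyperplane with normal \<open>-w\<close> yields a ray along which \<open>\<theta> \<bullet> \<eta> - a \<theta>\<close> is unbounded.\<close>
lemma conjugate_infinite_outside_hull:
  fixes a :: "'v::euclidean_space \<Rightarrow> real" and H :: "'x::finite \<Rightarrow> 'v"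
  assumes lower: "\<And>\<theta>. \<exists>x. a \<theta> \<le> \<theta> \<bullet> H x"
    and outside: "\<eta> \<notin> convex hull (range H)"
  shows "(SUP \<theta>. ereal (\<theta> \<bullet> \<eta> - a \<theta>)) = \<infinity>"
proof -
  have "closed (convex hull (range H))"
    by (intro compact_imp_closed compact_convex_hull finite_imp_compact) auto
  then obtain w b where w\<eta>: "w \<bullet> \<eta> < b" and wH: "\<forall>y\<in>convex hull (range H). b < w \<bullet> y"
    using separating_hyperplane_closed_point[OF convex_convex_hull _ outside] by blast
  define \<delta> where "\<delta> = b - w \<bullet> \<eta>"
  have \<delta>: "\<delta> > 0" using w\<eta> by (simp add: \<delta>_def)
  have ray: "t * \<delta> \<le> (t *\<^sub>R (-w)) \<bullet> \<eta> - a (t *\<^sub>R (-w))" if t: "t \<ge> 0" for t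
  proof -
    obtain x where x: "a (t *\<^sub>R (-w)) \<le> (t *\<^sub>R (-w)) \<bullet> H x" using lower by blast
    have "b < w \<bullet> H x" using wH by (meson hull_inc rangeI)
    then have "t * b \<le> t * (w \<bullet> H x)" using t by (intro mult_left_mono) auto
    then show ?thesis using x by (simp add: \<delta>_def algebra_simps)
  qed
  have "ereal (real n) \<le> (SUP \<theta>. ereal (\<theta> \<bullet> \<eta> - a \<theta>))" for n :: nat
  proof -
    define t where "t = real n / \<delta>"
    have "ereal (real n) = ereal (t * \<delta>)" using \<delta> by (simp add: t_def)
    also have "\<dots> \<le> ereal ((t *\<^sub>R (-w)) \<bullet> \<eta> - a (t *\<^sub>R (-w)))"
      using ray[of t] \<delta> by (simp add: t_def)
    also have "\<dots> \<le> (SUP \<theta>. ereal (\<theta> \<bullet> \<eta> - a \<theta>))" by (rule SUP_upper) auto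
    finally show ?thesis .
  qed
  then show ?thesis by (meson PInfty_neq_ereal(1) less_PInf_Ex_of_nat not_le top.not_eq_extremum)
qed

text \<open>If \<open>\<theta> \<bullet> H x - a \<theta> \<le> C\<close> for all points, the same bound holds for every convex
  combination \<open>\<eta>\<close> of the points, so the conjugate of \<open>a\<close> at \<open>\<eta>\<close> is at most \<open>C\<close>.\<close>
lemma conjugate_bounded_on_hull:
  fixes a :: "'v::real_inner \<Rightarrow> real" and H :: "'x \<Rightarrow> 'v"
  assumes upper: "\<And>\<theta> x. \<theta> \<bullet> H x - a \<theta> \<le> C"
    and inside: "\<eta> \<in> convex hull (range H)"
  shows "(SUP \<theta>. ereal (\<theta> \<bullet> \<eta> - a \<theta>)) \<le> ereal C"
proof (rule SUP_least)
  fix \<theta>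
  have "convex hull (range H) \<subseteq> {y. \<theta> \<bullet> y \<le> a \<theta> + C}"
    by (rule hull_minimal) (use upper convex_halfspace_le in \<open>auto simp: algebra_simps\<close>)
  then show "ereal (\<theta> \<bullet> \<eta> - a \<theta>) \<le> ereal C" using inside by auto
qed

lemma conjugate_finite_iff_in_hull:
  fixes a :: "'v::euclidean_space \<Rightarrow> real" and H :: "'x::finite \<Rightarrow> 'v"
  assumes lower: "\<And>\<theta>. \<exists>x. a \<theta> \<le> \<theta> \<bullet> H x"
    and upper: "\<And>\<theta> x. \<theta> \<bullet> H x - a \<theta> \<le> C"
  shows "(SUP \<theta>. ereal (\<theta> \<bullet> \<eta> - a \<theta>)) < \<infinity> \<longleftrightarrow> \<eta> \<in> convex hull (range H)"
proof
  assume "(SUP \<theta>. ereal (\<theta> \<bullet> \<eta> - a \<theta>)) < \<infinity>"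
  then show "\<eta> \<in> convex hull (range H)"
    using conjugate_infinite_outside_hull[OF lower] by force
next
  assume "\<eta> \<in> convex hull (range H)"
  then have "(SUP \<theta>. ereal (\<theta> \<bullet> \<eta> - a \<theta>)) \<le> ereal C"
    by (rule conjugate_bounded_on_hull[OF upper])
  then show "(SUP \<theta>. ereal (\<theta> \<bullet> \<eta> - a \<theta>)) < \<infinity>"
    using order.strict_trans1 by fastforce
qed

section \<open>Analysis of the phi-logarithm\<close>

text \<open>An absolutely continuous function on \<open>(0,\<infinity>)\<close> is continuous there
  (apply the definition to a single interval on \<open>[x/2, 2x]\<close>).\<close>
lemma isCont_if_abs_cont_pos:
  assumes ac: "abs_cont_pos f" and x: "x > 0"
  shows "isCont f x"
proof -
  have "abs_cont_on_interval f (x/2) (2*x)" using ac x unfolding abs_cont_pos_def by auto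
  show ?thesis unfolding isCont_def LIM_eq
  proof (intro allI impI)
    fix r :: real assume "0 < r"
    then obtain d where d: "d > 0" and small: "\<And>(n::nat) (a::nat \<Rightarrow> real) (b::nat \<Rightarrow> real).
        (\<forall>i<n. x/2 \<le> a i \<and> a i \<le> b i \<and> b i \<le> 2*x) \<and>
        (\<forall>i j. i < j \<and> j < n \<longrightarrow> b i \<le> a j) \<and> (\<Sum>i<n. b i - a i) < d
        \<longrightarrow> (\<Sum>i<n. \<bar>f (b i) - f (a i)\<bar>) < r"
      using \<open>abs_cont_on_interval f (x/2) (2*x)\<close> unfolding abs_cont_on_interval_def by blast
    have single: "\<bar>f v - f u\<bar> < r" if "x/2 \<le> u" "u \<le> v" "v \<le> 2*x" "v - u < d" for u v
      using small[of 1 "\<lambda>_. u" "\<lambda>_. v"] that by simp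
    show "\<exists>s>0. \<forall>y. y \<noteq> x \<and> norm (y - x) < s \<longrightarrow> norm (f y - f x) < r"
    proof (intro exI[of _ "min d (x/2)"] conjI allI impI)
      fix y assume "y \<noteq> x \<and> norm (y - x) < min d (x / 2)"
      then show "norm (f y - f x) < r"
        using single[of y x] single[of x y] x by (cases "y < x") (auto simp: abs_minus_commute)
    qed (use d x in auto)
  qed
qed

text \<open>Used to turn the divergence hypotheses on
  \<open>1/\<phi>\<close> into unboundedness of \<open>ln_phi\<close>.\<close>
lemma nn_integral_le_from_exhaustion:
  fixes f :: "real \<Rightarrow> real" and l u :: "nat \<Rightarrow> real"
  assumes incA: "\<And>i j. i \<le> j \<Longrightarrow> {l i..u i} \<subseteq> {l j..u j}"
    and S: "S = (\<Union>i. {l i..u i})"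
    and cont: "\<And>i. continuous_on {l i..u i} f"
    and nonneg: "\<And>x. x \<in> S \<Longrightarrow> 0 \<le> f x"
    and le: "\<And>i. (LBINT y:{l i..u i}. f y) \<le> R"
  shows "(\<integral>\<^sup>+ y\<in>S. ennreal (f y) \<partial>lborel) \<le> ennreal R"
proof -
  define F where "F i y = ennreal (indicator {l i..u i} y *\<^sub>R f y)" for i y
  have meas: "F i \<in> borel_measurable lborel" for i
  proof -
    have "(\<lambda>y. indicator {l i..u i} y *\<^sub>R f y) \<in> borel_measurable borel"
      by (rule borel_measurable_continuous_on_indicator) (use cont in auto)
    then show ?thesis unfolding F_def by simp
  qed
  have inc: "incseq F"
    unfolding incseq_def le_fun_def
  proof (intro allI impI)
    fix i j :: nat and y assume "i \<le> j"
    then have "{l i..u i} \<subseteq> {l j..u j}" by (rule incA)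
    then show "F i y \<le> F j y" by (auto simp: F_def split: split_indicator)
  qed
  have sup: "ennreal (f y) * indicator S y = (SUP i. F i y)" for y
  proof (cases "y \<in> S")
    case True
    then obtain i where i: "y \<in> {l i..u i}" using S by auto
    have "(SUP i. F i y) = ennreal (f y)"
    proof (rule antisym)
      show "(SUP i. F i y) \<le> ennreal (f y)"
        by (rule SUP_least) (auto simp: F_def split: split_indicator)
      show "ennreal (f y) \<le> (SUP i. F i y)"
        using SUP_upper[of i UNIV "\<lambda>i. F i y"] i by (auto simp: F_def)
    qed
    then show ?thesis using True by simp
  next
    case False
    then show ?thesis using S by (auto simp: F_def)
  qed
  have parts: "integral\<^sup>N lborel (F i) \<le> ennreal R" for i
  proof -
    have int: "integrable lborel (\<lambda>y. indicator {l i..u i} y *\<^sub>R f y)"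
      using borel_integrable_atLeastAtMost'[OF cont[of i]] unfolding set_integrable_def .
    have "integral\<^sup>N lborel (F i) = ennreal (LBINT y:{l i..u i}. f y)"
      unfolding F_def set_lebesgue_integral_def
      by (rule nn_integral_eq_integral[OF int]) (use nonneg S in \<open>auto split: split_indicator\<close>)
    then show ?thesis using le[of i] by (simp add: ennreal_leI)
  qed
  have "(\<integral>\<^sup>+ y\<in>S. ennreal (f y) \<partial>lborel) = (SUP i. integral\<^sup>N lborel (F i))"
    unfolding sup by (rule nn_integral_monotone_convergence_SUP[OF inc meas])
  also have "\<dots> \<le> ennreal R" by (rule SUP_least) (rule parts)
  finally show ?thesis .
qed

text \<open>The standing assumptions on \<open>\<phi>\<close> that the argument uses.\<close>
locale phi_logarithm =
  fixes \<phi> :: "real \<Rightarrow> real"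
  assumes phi_pos: "\<And>y. y > 0 \<Longrightarrow> \<phi> y > 0"
    and phi_ac: "abs_cont_pos \<phi>"
    and div0: "(\<integral>\<^sup>+ y\<in>{0<..1}. ennreal (1 / \<phi> y) \<partial>lborel) = \<infinity>"
    and div1: "(\<integral>\<^sup>+ y\<in>{1..}. ennreal (1 / \<phi> y) \<partial>lborel) = \<infinity>"
begin

abbreviation L where "L \<equiv> ln_phi \<phi>"
abbreviation E where "E \<equiv> exp_phi \<phi>"

lemma inv_phi_continuous_on: "0 < c \<Longrightarrow> continuous_on {c..d} (\<lambda>y. 1 / \<phi> y)"
  by (intro continuous_at_imp_continuous_on ballI)
     (auto intro!: continuous_intros isCont_if_abs_cont_pos[OF phi_ac]
           simp: phi_pos less_imp_neq[symmetric])

lemma L_deriv: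
  assumes x: "x > 0"
  shows "(L has_real_derivative 1 / \<phi> x) (at x)"
proof -
  define c d where "c = min 1 (x/2)" and "d = max 1 (2*x)"
  have cd: "0 < c" "c \<le> 1" "c < x" "1 \<le> d" "x < d" using x by (auto simp: c_def d_def)
  have "((\<lambda>v. LBINT y=ereal 1..ereal v. 1 / \<phi> y) has_vector_derivative (1 / \<phi> x))
          (at x within {c..d})"
    by (rule interval_integral_FTC2) (use cd inv_phi_continuous_on in auto)
  then have "(L has_vector_derivative (1 / \<phi> x)) (at x)"
    using at_within_Icc_at[of c x d] cd by (simp add: ln_phi_def[abs_def] one_ereal_def)
  then show ?thesis by (simp add: has_real_derivative_iff_has_vector_derivative)
qed

lemma L_less:
  assumes "0 < u" "u < v"
  shows "L u < L v"
proof (rule DERIV_pos_imp_increasing[OF assms(2)])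
  fix x assume "u \<le> x" "x \<le> v"
  then have "x > 0" using assms by auto
  then show "\<exists>y. DERIV L x :> y \<and> 0 < y"
    using L_deriv[of x] phi_pos[of x] by (intro exI[of _ "1 / \<phi> x"]) auto
qed

lemma L_le: "0 < u \<Longrightarrow> u \<le> v \<Longrightarrow> L u \<le> L v"
  using L_less[of u v] by (cases "u = v") auto

lemma L_one: "L 1 = 0"
  by (simp add: ln_phi_def one_ereal_def[symmetric])

lemma L_as_set_integral: "0 < c \<Longrightarrow> c \<le> d \<Longrightarrow> (LBINT y:{c..d}. 1 / \<phi> y) = L d - L c"
proof -
  assume c: "0 < c" "c \<le> d"
  have "(LBINT y:{c..d}. 1 / \<phi> y) = (LBINT y=c..d. 1 / \<phi> y)"
    using c by (simp add: interval_integral_Icc)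
  also have "\<dots> = L d - L c"
    unfolding ln_phi_def using c
    by (subst interval_integral_sum[of 1 c d, symmetric])
       (auto simp: interval_integrable_isCont isCont_if_abs_cont_pos[OF phi_ac] phi_pos
                   less_imp_neq[symmetric] interval_integral_endpoints_reverse[of 1 c]
                   min_def max_def one_ereal_def)
  finally show ?thesis .
qed

text \<open>Divergence of \<open>\<integral>\<^sub>1\<^sup>\<infinity> 1/\<phi>\<close>: \<open>ln_phi\<close> is unbounded above.\<close>
lemma L_unbounded_above: "\<exists>v\<ge>1. R \<le> L v"
proof (rule ccontr)
  assume "\<not> ?thesis"
  then have lt: "\<And>v. v \<ge> 1 \<Longrightarrow> L v < R" by force
  have "(\<integral>\<^sup>+ y\<in>{1..}. ennreal (1 / \<phi> y) \<partial>lborel) \<le> ennreal R"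
  proof (rule nn_integral_le_from_exhaustion[where l="\<lambda>_. 1" and u="\<lambda>i. 1 + real i"])
    show "{1..} = (\<Union>i. {1..1 + real i})"
    proof (auto)
      fix x :: real
      obtain n where "x \<le> real n" using real_arch_simple by blast
      then show "\<exists>i. x \<le> 1 + real i" by (intro exI[of _ n]) auto
    qed
    show "(LBINT y:{1..1 + real i}. 1 / \<phi> y) \<le> R" for i
      using lt[of "1 + real i"] by (simp add: L_as_set_integral L_one)
  qed (auto intro: inv_phi_continuous_on simp: phi_pos less_imp_le)
  then show False using div1 by (simp add: top_unique)
qed

text \<open>Divergence of \<open>\<integral>\<^sub>0\<^sup>1 1/\<phi>\<close>: \<open>ln_phi\<close> is unbounded below.\<close>
lemma L_unbounded_below: "\<exists>v. 0 < v \<and> v \<le> 1 \<and> L v \<le> R"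
proof (rule ccontr)
  assume "\<not> ?thesis"
  then have gt: "\<And>v. 0 < v \<Longrightarrow> v \<le> 1 \<Longrightarrow> R < L v" by force
  have "(\<integral>\<^sup>+ y\<in>{0<..1}. ennreal (1 / \<phi> y) \<partial>lborel) \<le> ennreal (-R)"
  proof (rule nn_integral_le_from_exhaustion[where l="\<lambda>i. 1 / (1 + real i)" and u="\<lambda>_. 1"])
    show "{1 / (1 + real i)..1} \<subseteq> {1 / (1 + real j)..1}" if "i \<le> j" for i j
      using that by (auto intro: order_trans[rotated] simp: frac_le)
    show "{0<..1} = (\<Union>i. {1 / (1 + real i)..1})"
    proof (auto)
      fix x :: real assume x: "0 < x" "x \<le> 1"
      obtain n where "1 / x < real n" using reals_Archimedean2 by blast
      then have "1 / (1 + real n) \<le> x" using x by (simp add: field_simps)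
      then show "\<exists>i. 1 / (1 + real i) \<le> x" by blast
    next
      fix x :: real and i :: nat assume "1 / (1 + real i) \<le> x"
      moreover have "0 < 1 / (1 + real i)" by simp
      ultimately show "0 < x" by linarith
    qed
    show "(LBINT y:{1 / (1 + real i)..1}. 1 / \<phi> y) \<le> - R" for i
      using gt[of "1 / (1 + real i)"] by (simp add: L_as_set_integral L_one)
  qed (auto intro: inv_phi_continuous_on simp: phi_pos less_imp_le)
  then show False using div0 by (simp add: top_unique)
qed

lemma L_bij: "bij_betw L {0<..} UNIV"
proof (rule bij_betw_imageI)
  show "inj_on L {0<..}"
    by (rule inj_onI) (metis L_less greaterThan_iff linorder_neqE_linordered_idom less_irrefl)
  have "t \<in> L ` {0<..}" for t
  proof -
    obtain v2 where v2: "v2 \<ge> 1" "t \<le> L v2" using L_unbounded_above by blast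
    obtain v1 where v1: "0 < v1" "v1 \<le> 1" "L v1 \<le> t" using L_unbounded_below by blast
    have "\<exists>x\<ge>v1. x \<le> v2 \<and> L x = t"
      by (rule IVT) (use v1 v2 in \<open>auto intro!: DERIV_isCont L_deriv\<close>)
    then show ?thesis using v1 by force
  qed
  then show "L ` {0<..} = UNIV" by auto
qed

lemma E_pos: "E t > 0"
  using bij_betw_the_inv_into[OF L_bij] by (auto simp: exp_phi_def bij_betw_def)

lemma L_E: "L (E t) = t"
  using f_the_inv_into_f_bij_betw[OF L_bij] by (simp add: exp_phi_def)

lemma E_L: "x > 0 \<Longrightarrow> E (L x) = x"
  using the_inv_into_f_f[OF bij_betw_imp_inj_on[OF L_bij]] by (simp add: exp_phi_def)

lemma E_zero: "E 0 = 1"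
  using E_L[of 1] L_one by simp

lemma E_less: "s < t \<Longrightarrow> E s < E t"
proof (rule ccontr)
  assume "s < t" "\<not> E s < E t"
  then have "L (E t) \<le> L (E s)" using E_pos by (intro L_le) auto
  then show False using \<open>s < t\<close> by (simp add: L_E)
qed

lemma E_le_imp_le_L: "E t \<le> K \<Longrightarrow> t \<le> L K"
  using L_le[of "E t" K] E_pos[of t] by (simp add: L_E)

lemma isCont_E: "isCont E t"
proof -
  define x where "x = E t"
  have x: "x > 0" using E_pos by (simp add: x_def)
  have near_x_pos: "\<bar>z - x\<bar> \<le> x / 2 \<Longrightarrow> z > 0" for z using x by arith
  have "isCont E (L x)"
    by (rule isCont_inverse_function[where f=L and d="x/2"])
       (use x near_x_pos in \<open>auto simp: E_L intro!: DERIV_isCont L_deriv\<close>)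
  then show ?thesis by (simp add: x_def L_E)
qed

lemma isCont_E_compose[continuous_intros]: "isCont g a \<Longrightarrow> isCont (\<lambda>x. E (g x)) a"
  using isCont_o2[OF _ isCont_E] by blast

end

section \<open>The normalising function of the phi-exponential family\<close>

locale phi_family = phi_logarithm +
  fixes \<mu> p :: "'x::finite \<Rightarrow> real" and H :: "'x \<Rightarrow> real ^ 'm"
  assumes mu_pos: "\<And>x. \<mu> x > 0"
    and p_pos: "\<And>x. p x > 0"
    and p_norm: "(\<Sum>x\<in>UNIV. p x * \<mu> x) = 1"
begin

text \<open>Total mass of the unnormalised density \<open>exp_phi (\<theta> \<bullet> H - a) p\<close>; \<open>alpha_phi\<close> is the
  unique \<open>a\<close> with \<open>Z \<theta> a = 1\<close>.\<close>
definition Z :: "real ^ 'm \<Rightarrow> real \<Rightarrow> real" where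
  "Z \<theta> a = (\<Sum>x\<in>UNIV. E (\<theta> \<bullet> H x - a) * p x * \<mu> x)"

abbreviation \<alpha> where "\<alpha> \<equiv> alpha_phi \<phi> \<mu> p H"

lemma weight_pos: "p x * \<mu> x > 0"
  using p_pos[of x] mu_pos[of x] by simp

text \<open>Comparing termwise with \<open>exp_phi 0 = 1\<close>: if all exponents are negative the total mass
  is below 1, if all are positive it is above 1.\<close>
lemma Z_less_one:
  assumes "\<And>x. \<theta> \<bullet> H x < a"
  shows "Z \<theta> a < 1"
proof -
  have "E (\<theta> \<bullet> H x - a) * (p x * \<mu> x) < 1 * (p x * \<mu> x)" for x
    using E_less[of "\<theta> \<bullet> H x - a" 0] assms[of x] weight_pos[of x]
    by (intro mult_strict_right_mono) (auto simp: E_zero)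
  then have "Z \<theta> a < (\<Sum>x\<in>UNIV. p x * \<mu> x)"
    unfolding Z_def mult.assoc by (intro sum_strict_mono) auto
  then show ?thesis by (simp add: p_norm)
qed

lemma Z_greater_one:
  assumes "\<And>x. a < \<theta> \<bullet> H x"
  shows "1 < Z \<theta> a"
proof -
  have "1 * (p x * \<mu> x) < E (\<theta> \<bullet> H x - a) * (p x * \<mu> x)" for x
    using E_less[of 0 "\<theta> \<bullet> H x - a"] assms[of x] weight_pos[of x]
    by (intro mult_strict_right_mono) (auto simp: E_zero)
  then have "(\<Sum>x\<in>UNIV. p x * \<mu> x) < Z \<theta> a"
    unfolding Z_def mult.assoc by (intro sum_strict_mono) auto
  then show ?thesis by (simp add: p_norm)
qed

lemma Z_strict_antimono: "a < b \<Longrightarrow> Z \<theta> b < Z \<theta> a"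
  unfolding Z_def mult.assoc
  by (rule sum_strict_mono) (auto intro!: mult_strict_right_mono weight_pos E_less)

text \<open>The defining equation of \<open>alpha_phi\<close>: \<open>Z \<theta>\<close> is continuous and strictly decreasing and
  crosses the value 1, so the normaliser exists and is unique.\<close>
lemma Z_alpha: "Z \<theta> (\<alpha> \<theta>) = 1"
proof -
  define B where "B = (\<Sum>x\<in>UNIV. \<bar>\<theta> \<bullet> H x\<bar>) + 1"
  have B: "\<theta> \<bullet> H x < B" "-B < \<theta> \<bullet> H x" for x
    using member_le_sum[of x UNIV "\<lambda>x. \<bar>\<theta> \<bullet> H x\<bar>"] by (auto simp: B_def)
  have "-B \<le> B" using B(1,2)[of undefined] by linarith
  moreover have "Z \<theta> B < 1" "1 < Z \<theta> (-B)"
    using B by (auto intro: Z_less_one Z_greater_one)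
  ultimately have "\<exists>a. -B \<le> a \<and> a \<le> B \<and> Z \<theta> a = 1"
    by (intro IVT2) (auto simp: Z_def intro!: continuous_intros)
  then have "\<exists>!a. Z \<theta> a = 1"
    by (metis Z_strict_antimono linorder_neqE_linordered_idom less_irrefl)
  then show ?thesis unfolding alpha_phi_def Z_def[symmetric] by (rule theI')
qed

lemma alpha_below_some_point: "\<exists>x. \<alpha> \<theta> \<le> \<theta> \<bullet> H x"
proof (rule ccontr)
  assume "\<not> ?thesis"
  then have "Z \<theta> (\<alpha> \<theta>) < 1" by (intro Z_less_one) (simp add: not_le)
  then show False by (simp add: Z_alpha)
qed

text \<open>Upper half: a single term of the normalisation sum is at most 1, giving
  \<open>\<theta> \<bullet> H x - \<alpha> \<theta> \<le> ln_phi (1/(p x \<mu> x))\<close>, a bound independent of \<open>\<theta>\<close>.\<close>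
lemma point_minus_alpha_le: "\<theta> \<bullet> H x - \<alpha> \<theta> \<le> L (1 / (p x * \<mu> x))"
proof -
  have "E (\<theta> \<bullet> H x - \<alpha> \<theta>) * (p x * \<mu> x) \<le> Z \<theta> (\<alpha> \<theta>)"
    unfolding Z_def mult.assoc
    by (rule member_le_sum)
       (auto intro!: mult_nonneg_nonneg less_imp_le[OF E_pos] less_imp_le[OF weight_pos])
  then have "E (\<theta> \<bullet> H x - \<alpha> \<theta>) \<le> 1 / (p x * \<mu> x)"
    using weight_pos[of x] by (simp add: Z_alpha field_simps)
  then show ?thesis by (rule E_le_imp_le_L)
qed

lemma point_minus_alpha_bounded: "\<theta> \<bullet> H x - \<alpha> \<theta> \<le> (\<Sum>y\<in>UNIV. \<bar>L (1 / (p y * \<mu> y))\<bar>)"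
  using point_minus_alpha_le[of \<theta> x]
        member_le_sum[of x UNIV "\<lambda>y. \<bar>L (1 / (p y * \<mu> y))\<bar>"] by simp

end

theorem theorem1:
  fixes \<mu> p :: "'x::finite \<Rightarrow> real"
    and \<phi> :: "real \<Rightarrow> real"
    and H :: "'x \<Rightarrow> real ^ 'm"
    and \<eta> :: "real ^ 'm"
  assumes mu_pos: "\<And>x. \<mu> x > 0"
    and p_pos: "\<And>x. p x > 0"
    and p_norm: "(\<Sum>x\<in>UNIV. p x * \<mu> x) = 1"
    and phi_pos: "\<And>y. y > 0 \<Longrightarrow> \<phi> y > 0"
    and phi_mono: "strict_mono_on {0<..} \<phi>"
    and phi_ac: "abs_cont_pos \<phi>"
    and div0: "(\<integral>\<^sup>+ y\<in>{0<..1}. ennreal (1 / \<phi> y) \<partial>lborel) = \<infinity>"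
    and div1: "(\<integral>\<^sup>+ y\<in>{1..}. ennreal (1 / \<phi> y) \<partial>lborel) = \<infinity>"
  shows "alpha_conj \<phi> \<mu> p H \<eta> < \<infinity> \<longleftrightarrow> \<eta> \<in> convex hull (range H)"
proof -
  interpret phi_family \<phi> \<mu> p H
    using phi_pos phi_ac div0 div1 mu_pos p_pos p_norm by unfold_locales auto
  show ?thesis
    unfolding alpha_conj_def
    by (rule conjugate_finite_iff_in_hull[OF alpha_below_some_point point_minus_alpha_bounded])
qed

end
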